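(* Let $p$ be a prime, $k\ge 1$, and $q=p^k$. Every integer group determinant $D$ of the group $GA(1,q)$ can be written in the form $$D=AB^{q-1},$$ where $A$ is a $\mathbb Z_{q-1}$ integer group determinant and $B$ is an integer with $B\equiv A \pmod q$.
   Context: For a finite group $G=\{g_1,\dots,g_n\}$ and an element $\sum_{g\in G}a_g g$ of the group ring $\mathbb Z[G]$ (all $a_g\in\mathbb Z$), the group determinant is $D\left(\sum_{g\in G}a_g g\right)=\det\left(a_{g_ig_j^{-1}}\right)_{i,j=1}^n$. An integer group determinant of $G$ is any integer of this form (with integer coefficients $a_g$). A $\mathbb Z_m$ integer group determinant (or $\mathbb Z_m$ integer determinant) is an integer group determinant of the cyclic group $\mathbb Z_m$; equivalently, an integer of the form $\prod_{x^m=1}f(x)$ for some $f\in\mathbb Z[x]$, the product being over all complex $m$-th roots of unity. The general affine group of degree one over $\mathbb F_q$ is $GA(1,q)=\left\{\begin{pmatrix} a & b\\ 0 & 1\end{pmatrix}: a\in\mathbb F_q^*,\ b\in\mathbb F_q\right\}$ under matrix multiplication, i.e. the semidirect product $\mathbb F_q\rtimes\mathbb F_q^*$ with $\mathbb F_q^*$ acting by multiplication; it has order $q(q-1)$. *)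

theory Defs
  imports "HOL-Combinatorics.Permutations" "HOL-Number_Theory.Cong"
    "HOL-Computational_Algebra.Primes"
begin

definition group_det ::
  "'g set \<Rightarrow> ('g \<Rightarrow> 'g \<Rightarrow> 'g) \<Rightarrow> ('g \<Rightarrow> 'g) \<Rightarrow> ('g \<Rightarrow> int) \<Rightarrow> int" where
  "group_det G gmul ginv a =
     (\<Sum>\<sigma> \<in> {\<sigma>. \<sigma> permutes G}. sign \<sigma> * (\<Prod>g\<in>G. a (gmul g (ginv (\<sigma> g)))))"

definition int_group_det :: "'g set \<Rightarrow> ('g \<Rightarrow> 'g \<Rightarrow> 'g) \<Rightarrow> ('g \<Rightarrow> 'g) \<Rightarrow> int \<Rightarrow> bool" where
  "int_group_det G gmul ginv D \<longleftrightarrow> (\<exists>a. D = group_det G gmul ginv a)"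

definition cyc_carrier :: "nat \<Rightarrow> nat set" where
  "cyc_carrier m = {0..<m}"
definition cyc_mult :: "nat \<Rightarrow> nat \<Rightarrow> nat \<Rightarrow> nat" where
  "cyc_mult m x y = (x + y) mod m"
definition cyc_inv :: "nat \<Rightarrow> nat \<Rightarrow> nat" where
  "cyc_inv m x = (m - x) mod m"

definition cyclic_int_det :: "nat \<Rightarrow> int \<Rightarrow> bool" where
  "cyclic_int_det m D \<longleftrightarrow> int_group_det (cyc_carrier m) (cyc_mult m) (cyc_inv m) D"

text \<open>GA(1,F): the pair (a,b) stands for the matrix [[a,b],[0,1]] with a \<noteq> 0.\<close>
definition ga_carrier :: "('a::field \<times> 'a) set" where
  "ga_carrier = {(a, b). a \<noteq> 0}"
definition ga_mult :: "('a::field \<times> 'a) \<Rightarrow> ('a \<times> 'a) \<Rightarrow> ('a \<times> 'a)" where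
  "ga_mult x y = (fst x * fst y, fst x * snd y + snd x)"
definition ga_inv :: "('a::field \<times> 'a) \<Rightarrow> ('a \<times> 'a)" where
  "ga_inv x = (inverse (fst x), - (snd x / fst x))"

end

theory Submission
  imports Defs "Jordan_Normal_Form.Determinant" "HOL-Computational_Algebra.Polynomial"
    "HOL-Number_Theory.Residues" "HOL-Analysis.Complex_Transcendental"
begin

(*
  Write an element of GA(1,q) as (s, t) with s \<noteq> 0 and substitute t \<mapsto> s t: the group
  matrix of a class function a becomes a(s/u, s (t - v)), a convolution in the second coordinate.
  Conjugating it by the character matrix (\<psi>(t v)) of a nontrivial additive character \<psi> of F_q
  makes it block diagonal, with one block E_y(s, u) = \<Sum>_w a(s/u, s w) \<psi>(-y w) for every y.
  The block E_0 is the group matrix of the cyclic group F_q^* for s \<mapsto> \<Sum>_d a(s, d), whose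
  determinant is A; the substitution s \<mapsto> y s shows det E_y = det E_1 =: B for y \<noteq> 0, so
  D = A B^(q-1). Finally det E_y = \<Sum>_z c_z \<psi>(-y z) with integers c_z, and by orthogonality
  \<Sum>_y det E_y \<psi>(y) equals both A - B and q c_1, so B \<equiv> A (mod q).
  A nontrivial character is x \<mapsto> exp(2 \<pi> i Tr(x) / p), Tr the trace to the prime field.
*)

section \<open>Determinants over finite index sets\<close>

definition det_on :: "'i set \<Rightarrow> ('i \<Rightarrow> 'i \<Rightarrow> 'r::comm_ring_1) \<Rightarrow> 'r" where
  "det_on I M = (\<Sum>\<sigma> | \<sigma> permutes I. of_int (sign \<sigma>) * (\<Prod>i\<in>I. M i (\<sigma> i)))"

lemma det_on_empty: "det_on {} M = 1"
  by (simp add: det_on_def permutes_empty)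

lemma group_det_eq_det_on:
  "group_det G gmul ginv a = det_on G (\<lambda>g h. a (gmul g (ginv h)))"
  by (simp add: group_det_def det_on_def)

lemma det_on_cong:
  assumes "\<And>i j. i \<in> I \<Longrightarrow> j \<in> I \<Longrightarrow> M i j = M' i j"
  shows "det_on I M = det_on I M'"
  unfolding det_on_def
  by (intro sum.cong refl arg_cong2[where f = "(*)"] prod.cong) (auto simp: assms permutes_in_image)

lemma det_on_of_int: "det_on I (\<lambda>i j. of_int (M i j)) = (of_int (det_on I M) :: 'r::comm_ring_1)"
  unfolding det_on_def by (simp add: of_int_sum of_int_prod)

lemma det_on_reindex:
  assumes f: "bij_betw f J I" and fin: "finite J"
  shows "det_on I M = det_on J (\<lambda>i j. M (f i) (f j))"
proof -
  have f': "bij_betw (inv_into J f) I J" using f by (rule bij_betw_inv_into)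
  have inj: "inj_on f J" using f by (simp add: bij_betw_def)
  have "det_on J (\<lambda>i j. M (f i) (f j)) = det_on I M"
    unfolding det_on_def
  proof (rule sum.reindex_bij_witness[where j = "map_permutation J f" and i = "map_permutation I (inv_into J f)"])
    fix \<sigma> assume "\<sigma> \<in> {\<sigma>. \<sigma> permutes I}"
    then have \<sigma>: "\<sigma> permutes I" by simp
    show "map_permutation I (inv_into J f) \<sigma> \<in> {\<sigma>. \<sigma> permutes J}"
      using map_permutation_permutes[OF f' \<sigma>] by simp
    show "map_permutation J f (map_permutation I (inv_into J f) \<sigma>) = \<sigma>"
      by (rule map_permutation_compose_inv[OF f' \<sigma>]) (use f in \<open>auto simp: bij_betw_def f_inv_into_f\<close>)
  next
    fix \<pi> assume "\<pi> \<in> {\<pi>. \<pi> permutes J}"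
    then have \<pi>: "\<pi> permutes J" by simp
    show "map_permutation J f \<pi> \<in> {\<sigma>. \<sigma> permutes I}"
      using map_permutation_permutes[OF f \<pi>] by simp
    show "map_permutation I (inv_into J f) (map_permutation J f \<pi>) = \<pi>"
      by (rule map_permutation_compose_inv[OF f \<pi>]) (use inj in auto)
    have "(\<Prod>i\<in>I. M i (map_permutation J f \<pi> i)) = (\<Prod>j\<in>J. M (f j) (map_permutation J f \<pi> (f j)))"
      using prod.reindex_bij_betw[OF f, of "\<lambda>i. M i (map_permutation J f \<pi> i)"] by simp
    also have "\<dots> = (\<Prod>j\<in>J. M (f j) (f (\<pi> j)))"
      by (rule prod.cong) (auto simp: map_permutation_apply[OF inj])
    finally show "of_int (sign (map_permutation J f \<pi>)) * (\<Prod>i\<in>I. M i (map_permutation J f \<pi> i))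
        = of_int (sign \<pi>) * (\<Prod>j\<in>J. M (f j) (f (\<pi> j)))"
      by (simp add: sign_map_permutation[OF inj \<pi> fin])
  qed
  then show ?thesis by simp
qed

lemma det_on_eq_det: "det_on {0..<n} M = Determinant.det (Matrix.mat n n (\<lambda>(i, j). M i j))"
  unfolding det_on_def
  by (subst Determinant.det_def'[of _ n]) (auto intro!: sum.cong prod.cong simp: permutes_in_image)

lemma det_on_mult:
  fixes A B :: "'i \<Rightarrow> 'i \<Rightarrow> 'r::comm_ring_1"
  assumes fin: "finite I"
  shows "det_on I (\<lambda>i j. \<Sum>k\<in>I. A i k * B k j) = det_on I A * det_on I B"
proof -
  define n where "n = card I"
  obtain e where e: "bij_betw e {0..<n} I"
    using ex_bij_betw_nat_finite[OF fin] unfolding n_def by blast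
  define mat_of where "mat_of M = Matrix.mat n n (\<lambda>(i, j). M (e i) (e j))" for M :: "'i \<Rightarrow> 'i \<Rightarrow> 'r"
  have det_on_as_det: "det_on I M = Determinant.det (mat_of M)" for M
    by (simp add: det_on_reindex[OF e] det_on_eq_det mat_of_def)
  have "mat_of (\<lambda>i j. \<Sum>k\<in>I. A i k * B k j) = mat_of A * mat_of B"
  proof (rule eq_matI)
    fix i j assume "i < dim_row (mat_of A * mat_of B)" and "j < dim_col (mat_of A * mat_of B)"
    then have ij: "i < n" "j < n" by (auto simp: mat_of_def)
    have "(\<Sum>k\<in>I. A (e i) k * B k (e j)) = (\<Sum>k\<in>{0..<n}. A (e i) (e k) * B (e k) (e j))"
      using sum.reindex_bij_betw[OF e, of "\<lambda>k. A (e i) k * B k (e j)"] by simp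
    then show "mat_of (\<lambda>i j. \<Sum>k\<in>I. A i k * B k j) $$ (i, j) = (mat_of A * mat_of B) $$ (i, j)"
      using ij by (auto simp: mat_of_def scalar_prod_def intro!: sum.cong)
  qed (auto simp: mat_of_def)
  then show ?thesis
    by (simp add: det_on_as_det Determinant.det_mult[where n = n] mat_of_def)
qed

lemma det_on_diagonal:
  assumes "finite I"
  shows "det_on I (\<lambda>i j. if i = j then d i else 0) = (\<Prod>i\<in>I. d i)"
proof -
  have "det_on I (\<lambda>i j. if i = j then d i else 0)
      = (\<Sum>\<sigma>\<in>{id}. of_int (sign \<sigma>) * (\<Prod>i\<in>I. if i = \<sigma> i then d i else 0))"
    unfolding det_on_def
  proof (rule sum.mono_neutral_right)
    show "finite {\<sigma>. \<sigma> permutes I}" using assms by (rule finite_permutations)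
    show "{id} \<subseteq> {\<sigma>. \<sigma> permutes I}" by (simp add: permutes_id)
    show "\<forall>\<sigma>\<in>{\<sigma>. \<sigma> permutes I} - {id}. of_int (sign \<sigma>) * (\<Prod>i\<in>I. if i = \<sigma> i then d i else 0) = 0"
    proof
      fix \<sigma> assume "\<sigma> \<in> {\<sigma>. \<sigma> permutes I} - {id}"
      then obtain i where "\<sigma> i \<noteq> i" "\<sigma> permutes I" by (auto simp: fun_eq_iff)
      moreover from this have "i \<in> I" by (meson permutes_not_in)
      ultimately have "(\<Prod>i\<in>I. if i = \<sigma> i then d i else 0) = 0"
        using assms by (intro prod_zero) (auto intro!: bexI[of _ i])
      then show "of_int (sign \<sigma>) * (\<Prod>i\<in>I. if i = \<sigma> i then d i else 0) = 0"
        by simp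
    qed
  qed
  then show ?thesis by simp
qed

lemma det_on_similar:
  fixes N F B :: "'i \<Rightarrow> 'i \<Rightarrow> 'r::idom"
  assumes fin: "finite I" and F: "det_on I F \<noteq> 0"
    and intertwine: "\<And>g h. g \<in> I \<Longrightarrow> h \<in> I \<Longrightarrow> (\<Sum>k\<in>I. N g k * F k h) = (\<Sum>k\<in>I. F g k * B k h)"
  shows "det_on I N = det_on I B"
proof -
  have "det_on I N * det_on I F = det_on I (\<lambda>g h. \<Sum>k\<in>I. N g k * F k h)"
    by (rule det_on_mult[OF fin, symmetric])
  also have "\<dots> = det_on I (\<lambda>g h. \<Sum>k\<in>I. F g k * B k h)"
    by (rule det_on_cong) (rule intertwine)
  also have "\<dots> = det_on I F * det_on I B"
    by (rule det_on_mult[OF fin])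
  finally show ?thesis using F by (simp add: mult.commute)
qed

lemma bij_betw_compose_permutes_disjoint:
  assumes disj: "I1 \<inter> I2 = {}" and fin: "finite I1"
  shows "bij_betw (\<lambda>(\<sigma>1, \<sigma>2). \<sigma>1 \<circ> \<sigma>2) ({\<sigma>. \<sigma> permutes I1} \<times> {\<sigma>. \<sigma> permutes I2})
           {\<sigma>. \<sigma> permutes (I1 \<union> I2) \<and> (\<forall>i\<in>I1. \<sigma> i \<in> I1)}"
proof (rule bij_betwI[where g = "\<lambda>\<sigma>. (restrict_id \<sigma> I1, restrict_id \<sigma> I2)"])
  show "(\<lambda>(\<sigma>1, \<sigma>2). \<sigma>1 \<circ> \<sigma>2) \<in> {\<sigma>. \<sigma> permutes I1} \<times> {\<sigma>. \<sigma> permutes I2}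
      \<rightarrow> {\<sigma>. \<sigma> permutes (I1 \<union> I2) \<and> (\<forall>i\<in>I1. \<sigma> i \<in> I1)}"
  proof safe
    fix \<sigma>1 \<sigma>2 assume \<sigma>1: "\<sigma>1 permutes I1" and \<sigma>2: "\<sigma>2 permutes I2"
    show "\<sigma>1 \<circ> \<sigma>2 permutes (I1 \<union> I2)"
      using \<sigma>1 \<sigma>2 by (blast intro: permutes_compose permutes_subset)
    fix i assume "i \<in> I1"
    with disj \<sigma>1 \<sigma>2 show "(\<sigma>1 \<circ> \<sigma>2) i \<in> I1"
      by (auto simp: disjoint_iff permutes_not_in permutes_in_image)
  qed
  have invariant: "bij_betw \<sigma> I1 I1" "bij_betw \<sigma> I2 I2"
    if \<sigma>: "\<sigma> permutes (I1 \<union> I2)" and I1: "\<forall>i\<in>I1. \<sigma> i \<in> I1" for \<sigma>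
  proof -
    have inj: "inj \<sigma>" using \<sigma> by (rule permutes_inj)
    have image1: "\<sigma> ` I1 = I1"
      using I1 inj by (intro endo_inj_surj[OF fin]) (auto simp: inj_on_def)
    have I2: "I2 = (I1 \<union> I2) - I1" using disj by blast
    then have "\<sigma> ` I2 = \<sigma> ` (I1 \<union> I2) - \<sigma> ` I1" using inj by (metis image_set_diff)
    also have "\<dots> = I2" using permutes_image[OF \<sigma>] image1 I2 by simp
    finally have "\<sigma> ` I2 = I2" .
    with image1 inj show "bij_betw \<sigma> I1 I1" "bij_betw \<sigma> I2 I2"
      by (auto simp: bij_betw_def inj_on_def)
  qed
  show "(\<lambda>\<sigma>. (restrict_id \<sigma> I1, restrict_id \<sigma> I2))
      \<in> {\<sigma>. \<sigma> permutes (I1 \<union> I2) \<and> (\<forall>i\<in>I1. \<sigma> i \<in> I1)}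
      \<rightarrow> {\<sigma>. \<sigma> permutes I1} \<times> {\<sigma>. \<sigma> permutes I2}"
    using invariant by (auto intro: permutes_restrict_id)
  fix \<sigma> assume "\<sigma> \<in> {\<sigma>. \<sigma> permutes (I1 \<union> I2) \<and> (\<forall>i\<in>I1. \<sigma> i \<in> I1)}"
  then have \<sigma>: "\<sigma> permutes (I1 \<union> I2)" and I2: "bij_betw \<sigma> I2 I2" using invariant by auto
  show "(\<lambda>(\<sigma>1, \<sigma>2). \<sigma>1 \<circ> \<sigma>2) (restrict_id \<sigma> I1, restrict_id \<sigma> I2) = \<sigma>"
  proof
    fix x
    show "(\<lambda>(\<sigma>1, \<sigma>2). \<sigma>1 \<circ> \<sigma>2) (restrict_id \<sigma> I1, restrict_id \<sigma> I2) x = \<sigma> x"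
    proof (cases "x \<in> I2")
      case True
      then have "\<sigma> x \<notin> I1" using I2 disj by (auto simp: bij_betw_def)
      with True show ?thesis by simp
    qed (use permutes_not_in[OF \<sigma>, of x] in \<open>auto simp: restrict_id_def\<close>)
  qed
next
  fix \<sigma>12 assume "\<sigma>12 \<in> {\<sigma>. \<sigma> permutes I1} \<times> {\<sigma>. \<sigma> permutes I2}"
  then obtain \<sigma>1 \<sigma>2 where \<sigma>12: "\<sigma>12 = (\<sigma>1, \<sigma>2)"
    and \<sigma>1: "\<sigma>1 permutes I1" and \<sigma>2: "\<sigma>2 permutes I2"
    by auto
  have "\<sigma>2 x = x" if "x \<in> I1" for x
    using that disj \<sigma>2 by (meson disjoint_iff permutes_not_in)
  moreover have "\<sigma>1 (\<sigma>2 x) = \<sigma>2 x" if "x \<in> I2" for x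
    using that disj \<sigma>1 \<sigma>2 by (meson disjoint_iff permutes_in_image permutes_not_in)
  ultimately have "restrict_id (\<sigma>1 \<circ> \<sigma>2) I1 = \<sigma>1" "restrict_id (\<sigma>1 \<circ> \<sigma>2) I2 = \<sigma>2"
    using \<sigma>1 \<sigma>2 by (auto simp: fun_eq_iff restrict_id_def permutes_not_in)
  then show "(\<lambda>\<sigma>. (restrict_id \<sigma> I1, restrict_id \<sigma> I2)) ((\<lambda>(\<sigma>1, \<sigma>2). \<sigma>1 \<circ> \<sigma>2) \<sigma>12)
      = \<sigma>12"
    by (simp add: \<sigma>12)
qed

lemma det_on_block_lower_triangular:
  assumes fin1: "finite I1" and fin2: "finite I2" and disj: "I1 \<inter> I2 = {}"
    and zero: "\<And>i j. i \<in> I1 \<Longrightarrow> j \<in> I2 \<Longrightarrow> M i j = 0"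
  shows "det_on (I1 \<union> I2) M = det_on I1 M * det_on I2 M"
proof -
  let ?K = "{\<sigma>. \<sigma> permutes (I1 \<union> I2) \<and> (\<forall>i\<in>I1. \<sigma> i \<in> I1)}"
  let ?P = "\<lambda>I. {\<sigma>. \<sigma> permutes I}"
  let ?term = "\<lambda>I \<sigma>. of_int (sign \<sigma>) * (\<Prod>i\<in>I. M i (\<sigma> i))"
  have "det_on (I1 \<union> I2) M = sum (?term (I1 \<union> I2)) ?K"
    unfolding det_on_def
  proof (rule sum.mono_neutral_right)
    show "finite (?P (I1 \<union> I2))" using fin1 fin2 by (simp add: finite_permutations)
    show "\<forall>\<sigma>\<in>?P (I1 \<union> I2) - ?K. ?term (I1 \<union> I2) \<sigma> = 0"
    proof
      fix \<sigma> assume "\<sigma> \<in> ?P (I1 \<union> I2) - ?K"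
      then obtain i where \<sigma>: "\<sigma> permutes (I1 \<union> I2)" and i: "i \<in> I1" "\<sigma> i \<notin> I1" by auto
      then have "M i (\<sigma> i) = 0" using zero permutes_in_image[OF \<sigma>, of i] by auto
      then have "(\<Prod>i\<in>I1 \<union> I2. M i (\<sigma> i)) = 0"
        using fin1 fin2 i by (intro prod_zero) (auto intro!: bexI[of _ i])
      then show "?term (I1 \<union> I2) \<sigma> = 0" by simp
    qed
  qed auto
  also have "\<dots> = (\<Sum>\<sigma>12\<in>?P I1 \<times> ?P I2. ?term (I1 \<union> I2) ((\<lambda>(\<sigma>1, \<sigma>2). \<sigma>1 \<circ> \<sigma>2) \<sigma>12))"
    by (rule sum.reindex_bij_betw[OF bij_betw_compose_permutes_disjoint[OF disj fin1], symmetric])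
  also have "\<dots> = (\<Sum>(\<sigma>1, \<sigma>2)\<in>?P I1 \<times> ?P I2. ?term I1 \<sigma>1 * ?term I2 \<sigma>2)"
  proof (rule sum.cong, simp, clarsimp)
    fix \<sigma>1 \<sigma>2 assume \<sigma>1: "\<sigma>1 permutes I1" and \<sigma>2: "\<sigma>2 permutes I2"
    have fix1: "\<sigma>2 i = i" if "i \<in> I1" for i
      using that disj \<sigma>2 by (meson disjoint_iff permutes_not_in)
    have fix2: "\<sigma>1 (\<sigma>2 i) = \<sigma>2 i" if "i \<in> I2" for i
      using that disj \<sigma>1 \<sigma>2 by (meson disjoint_iff permutes_in_image permutes_not_in)
    have "sign (\<sigma>1 \<circ> \<sigma>2) = sign \<sigma>1 * sign \<sigma>2"
      using \<sigma>1 \<sigma>2 fin1 fin2 by (intro sign_compose) (auto intro: permutes_imp_permutation)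
    moreover have "(\<Prod>i\<in>I1 \<union> I2. M i (\<sigma>1 (\<sigma>2 i))) = (\<Prod>i\<in>I1. M i (\<sigma>1 i)) * (\<Prod>i\<in>I2. M i (\<sigma>2 i))"
      using fin1 fin2 disj by (simp add: prod.union_disjoint fix1 fix2 cong: prod.cong)
    ultimately show "of_int (sign (\<sigma>1 \<circ> \<sigma>2)) * (\<Prod>i\<in>I1 \<union> I2. M i (\<sigma>1 (\<sigma>2 i)))
        = of_int (sign \<sigma>1) * (\<Prod>i\<in>I1. M i (\<sigma>1 i)) * (of_int (sign \<sigma>2) * (\<Prod>i\<in>I2. M i (\<sigma>2 i)))"
      by (simp add: mult_ac)
  qed
  also have "\<dots> = det_on I1 M * det_on I2 M"
    unfolding det_on_def by (simp add: sum_product sum.cartesian_product)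
  finally show ?thesis .
qed

lemma det_on_block_diagonal:
  fixes M :: "'y \<Rightarrow> 's \<Rightarrow> 's \<Rightarrow> 'r::comm_ring_1"
  assumes "finite S" and "finite Y"
  shows "det_on (S \<times> Y) (\<lambda>g h. if snd g = snd h then M (snd g) (fst g) (fst h) else 0)
    = (\<Prod>y\<in>Y. det_on S (M y))"
  using \<open>finite Y\<close>
proof (induction Y rule: finite_induct)
  case (insert y Y)
  let ?B = "\<lambda>g h. if snd g = snd h then M (snd g) (fst g) (fst h) else 0"
  have "S \<times> insert y Y = (S \<times> {y}) \<union> (S \<times> Y)" by auto
  moreover have "det_on ((S \<times> {y}) \<union> (S \<times> Y)) ?B = det_on (S \<times> {y}) ?B * det_on (S \<times> Y) ?B"
    by (rule det_on_block_lower_triangular) (use \<open>finite S\<close> insert in auto)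
  ultimately have "det_on (S \<times> insert y Y) ?B = det_on (S \<times> {y}) ?B * det_on (S \<times> Y) ?B"
    by simp
  moreover have "bij_betw (\<lambda>s. (s, y)) S (S \<times> {y})"
    by (auto simp: bij_betw_def inj_on_def)
  then have "det_on (S \<times> {y}) ?B = det_on S (M y)"
    using \<open>finite S\<close> by (simp add: det_on_reindex[of "\<lambda>s. (s, y)" S "S \<times> {y}"])
  ultimately show ?case using insert by simp
qed (simp add: det_on_empty)

section \<open>Finite fields\<close>

lemma power_eq_power_mod:
  fixes x :: "'a::monoid_mult"
  assumes "x ^ n = 1"
  shows "x ^ m = x ^ (m mod n)"
proof -
  have "x ^ m = x ^ (n * (m div n) + m mod n)" by simp
  also have "\<dots> = (x ^ n) ^ (m div n) * x ^ (m mod n)" by (simp only: power_add power_mult)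
  finally show ?thesis by (simp add: assms)
qed

text \<open>The field \<open>'a\<close> as an HOL-Algebra structure, to use the cyclicity of its unit group.\<close>

definition type_ring :: "'a::field ring" where
  "type_ring = \<lparr>carrier = UNIV, monoid.mult = (*), one = 1, zero = 0, add = (+)\<rparr>"

lemma field_type_ring: "field (type_ring :: 'a::field ring)"
proof -
  have "\<exists>y. x + y = 0" for x :: 'a
    by (rule exI[of _ "- x"]) simp
  moreover have "x \<noteq> 0 \<Longrightarrow> \<exists>y. x * y = 1" for x :: 'a
    by (rule exI[of _ "inverse x"]) simp
  ultimately show ?thesis
    unfolding type_ring_def by unfold_locales (auto simp: algebra_simps Units_def)
qed

lemma finite_field_power_card_minus_one:
  fixes x :: "'a::{finite,field}"
  assumes "x \<noteq> 0"
  shows "x ^ (card (UNIV :: 'a set) - 1) = 1"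
proof -
  let ?R = "type_ring :: 'a ring"
  interpret field ?R by (rule field_type_ring)
  interpret units: group "mult_of ?R" by (rule field_mult_group)
  have pow: "x [^]\<^bsub>mult_of ?R\<^esub> n = x ^ n" for n :: nat
    by (induction n) (simp_all add: type_ring_def)
  have "order (mult_of ?R) = card (UNIV :: 'a set) - 1"
    by (simp add: order_mult_of order_def type_ring_def)
  then have "x ^ (card (UNIV :: 'a set) - 1) = x [^]\<^bsub>mult_of ?R\<^esub> order (mult_of ?R)"
    by (simp only: pow)
  also have "\<dots> = \<one>\<^bsub>mult_of ?R\<^esub>"
    using assms by (intro units.pow_order_eq_1) (simp add: type_ring_def)
  finally show ?thesis by (simp add: type_ring_def)
qed

lemma finite_field_power_card:
  fixes x :: "'a::{finite,field}"
  shows "x ^ card (UNIV :: 'a set) = x"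
proof -
  have "card (UNIV :: 'a set) = Suc (card (UNIV :: 'a set) - 1)"
    using finite_UNIV_card_ge_0[where 'a = 'a] by simp
  then show ?thesis
    by (cases "x = 0") (metis power_0_Suc, metis finite_field_power_card_minus_one mult_1_right power_Suc)
qed

lemma finite_field_units_cyclic:
  obtains \<gamma> :: "'a::{finite,field}"
  where "\<gamma> \<noteq> 0" and "bij_betw (\<lambda>i. \<gamma> ^ i) {0..<card (UNIV :: 'a set) - 1} (UNIV - {0})"
proof -
  let ?R = "type_ring :: 'a ring"
  interpret field ?R by (rule field_type_ring)
  obtain \<gamma> where \<gamma>: "\<gamma> \<in> carrier (mult_of ?R)"
    and gen: "carrier (mult_of ?R) = {\<gamma> [^]\<^bsub>?R\<^esub> i | i::nat. i \<in> UNIV}"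
    using finite_field_mult_group_has_gen by (auto simp: type_ring_def)
  have pow: "\<gamma> [^]\<^bsub>?R\<^esub> i = \<gamma> ^ i" for i :: nat
    by (induction i) (simp_all add: type_ring_def)
  have units: "carrier (mult_of ?R) = UNIV - {0}" by (simp add: type_ring_def)
  define n where "n = card (UNIV :: 'a set) - 1"
  have \<gamma>0: "\<gamma> \<noteq> 0" using \<gamma> unfolding units by simp
  have \<gamma>n: "\<gamma> ^ n = 1" using finite_field_power_card_minus_one[OF \<gamma>0] by (simp add: n_def)
  have "card {0::'a, 1} \<le> card (UNIV :: 'a set)" by (rule card_mono) simp_all
  then have "n > 0" by (simp add: n_def)
  have "UNIV - {0} \<subseteq> (\<lambda>i. \<gamma> ^ i) ` {0..<n}"
  proof
    fix x :: 'a assume "x \<in> UNIV - {0}"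
    then obtain i where "x = \<gamma> ^ i" using gen unfolding pow units by auto
    then have "x = \<gamma> ^ (i mod n)" using power_eq_power_mod[OF \<gamma>n] by simp
    with \<open>n > 0\<close> show "x \<in> (\<lambda>i. \<gamma> ^ i) ` {0..<n}" by auto
  qed
  then have "(\<lambda>i. \<gamma> ^ i) ` {0..<n} = UNIV - {0}" using \<gamma>0 by auto
  moreover have "card (UNIV - {0::'a}) = n" by (simp add: n_def card_Diff_singleton)
  ultimately have "bij_betw (\<lambda>i. \<gamma> ^ i) {0..<n} (UNIV - {0})"
    by (simp add: bij_betw_def eq_card_imp_inj_on)
  with \<gamma>0 show ?thesis using that unfolding n_def by blast
qed

lemma cyclic_int_det_units_group_det:
  fixes b :: "'a::{finite,field} \<Rightarrow> int"
  shows "cyclic_int_det (card (UNIV :: 'a set) - 1) (det_on (UNIV - {0}) (\<lambda>s u. b (s / u)))"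
proof -
  define n where "n = card (UNIV :: 'a set) - 1"
  obtain \<gamma> :: 'a where \<gamma>: "\<gamma> \<noteq> 0" and bij: "bij_betw (\<lambda>i. \<gamma> ^ i) {0..<n} (UNIV - {0})"
    using finite_field_units_cyclic unfolding n_def by blast
  have \<gamma>n: "\<gamma> ^ n = 1" using finite_field_power_card_minus_one[OF \<gamma>] by (simp add: n_def)
  have "det_on (UNIV - {0}) (\<lambda>s u. b (s / u)) = det_on {0..<n} (\<lambda>i j. b (\<gamma> ^ i / \<gamma> ^ j))"
    using bij by (rule det_on_reindex) simp
  also have "\<dots> = det_on {0..<n} (\<lambda>i j. b (\<gamma> ^ cyc_mult n i (cyc_inv n j)))"
  proof (rule det_on_cong)
    fix i j assume "i \<in> {0..<n}" "j \<in> {0..<n}"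
    then have "(cyc_mult n i (cyc_inv n j) + j) mod n = i"
      by (cases "j = 0") (simp_all add: cyc_mult_def cyc_inv_def mod_add_left_eq)
    then have "\<gamma> ^ cyc_mult n i (cyc_inv n j) * \<gamma> ^ j = \<gamma> ^ i"
      by (metis power_add power_eq_power_mod[OF \<gamma>n])
    then have "\<gamma> ^ i / \<gamma> ^ j = \<gamma> ^ cyc_mult n i (cyc_inv n j)"
      using \<gamma> by (simp add: divide_eq_eq)
    then show "b (\<gamma> ^ i / \<gamma> ^ j) = b (\<gamma> ^ cyc_mult n i (cyc_inv n j))"
      by simp
  qed
  also have "\<dots> = group_det (cyc_carrier n) (cyc_mult n) (cyc_inv n) (\<lambda>m. b (\<gamma> ^ m))"
    by (simp add: group_det_eq_det_on cyc_carrier_def)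
  finally show ?thesis unfolding cyclic_int_det_def int_group_det_def n_def by blast
qed

lemma add_power_prime_eq:
  fixes x y :: "'a::comm_ring_1" and p :: nat
  assumes p: "prime p" and char: "of_nat p = (0::'a)"
  shows "(x + y) ^ p = x ^ p + y ^ p"
proof -
  have "(x + y) ^ p = (\<Sum>k\<le>p. of_nat (p choose k) * x ^ k * y ^ (p - k))"
    by (rule binomial_ring)
  also have "\<dots> = (\<Sum>k\<in>{0, p}. of_nat (p choose k) * x ^ k * y ^ (p - k))"
  proof (rule sum.mono_neutral_right)
    show "\<forall>k\<in>{..p} - {0, p}. of_nat (p choose k) * x ^ k * y ^ (p - k) = 0"
    proof
      fix k assume "k \<in> {..p} - {0, p}"
      then have "p dvd (p choose k)" using p by (intro dvd_choose_prime) auto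
      then show "of_nat (p choose k) * x ^ k * y ^ (p - k) = 0" using char by (auto elim!: dvdE)
    qed
  qed auto
  also have "\<dots> = x ^ p + y ^ p" using prime_gt_0_nat[OF p] by simp
  finally show ?thesis .
qed

lemma add_power_prime_power_eq:
  fixes x y :: "'a::comm_ring_1" and p :: nat
  assumes "prime p" and "of_nat p = (0::'a)"
  shows "(x + y) ^ (p ^ j) = x ^ (p ^ j) + y ^ (p ^ j)"
proof (induction j)
  case (Suc j)
  have "(x + y) ^ (p ^ Suc j) = ((x + y) ^ (p ^ j)) ^ p"
    by (simp add: power_mult[symmetric] mult.commute)
  also have "\<dots> = (x ^ (p ^ j)) ^ p + (y ^ (p ^ j)) ^ p"
    by (simp add: Suc add_power_prime_eq[OF assms])
  finally show ?case by (simp add: power_mult[symmetric] mult.commute)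
qed simp

lemma sum_power_prime_eq:
  fixes f :: "'b \<Rightarrow> 'a::comm_ring_1" and p :: nat
  assumes "prime p" and "of_nat p = (0::'a)" and "finite A"
  shows "(\<Sum>i\<in>A. f i) ^ p = (\<Sum>i\<in>A. f i ^ p)"
  using \<open>finite A\<close>
  by (induction A rule: finite_induct)
    (simp_all add: add_power_prime_eq[OF assms(1,2)] zero_power prime_gt_0_nat[OF assms(1)])

text \<open>For \<open>card UNIV = p ^ k\<close> this is the trace of \<open>'a\<close> over its prime field.\<close>

definition field_trace :: "nat \<Rightarrow> nat \<Rightarrow> 'a::comm_ring_1 \<Rightarrow> 'a" where
  "field_trace p k x = (\<Sum>j<k. x ^ (p ^ j))"

lemma field_trace_add:
  fixes p :: nat
  assumes "prime p" and "of_nat p = (0::'a::comm_ring_1)"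
  shows "field_trace p k (x + y) = field_trace p k x + field_trace p k (y :: 'a)"
  by (simp add: field_trace_def add_power_prime_power_eq[OF assms] sum.distrib)

section \<open>Additive characters\<close>

locale nontrivial_additive_character =
  fixes \<psi> :: "'a::{finite,field} \<Rightarrow> complex"
  assumes character_add: "\<psi> (x + y) = \<psi> x * \<psi> y"
    and character_zero: "\<psi> 0 = 1"
    and character_nontrivial: "\<exists>x. \<psi> x \<noteq> 1"

context nontrivial_additive_character
begin

lemma character_sum: "finite A \<Longrightarrow> \<psi> (\<Sum>s\<in>A. g s) = (\<Prod>s\<in>A. \<psi> (g s))"
  by (induction A rule: finite_induct) (simp_all add: character_zero character_add)

lemma sum_character_mult:
  "(\<Sum>y\<in>UNIV. \<psi> (y * z)) = (if z = 0 then of_nat (card (UNIV :: 'a set)) else 0)"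
proof (cases "z = 0")
  case False
  obtain x0 where x0: "\<psi> x0 \<noteq> 1" using character_nontrivial by blast
  have "(\<Sum>x\<in>UNIV. \<psi> (x + x0)) = (\<Sum>x\<in>UNIV. \<psi> x)"
    by (rule sum.reindex_bij_witness[of _ "\<lambda>x. x - x0" "\<lambda>x. x + x0"]) auto
  then have "(\<psi> x0 - 1) * (\<Sum>x\<in>UNIV. \<psi> x) = 0"
    by (simp add: character_add sum_distrib_left algebra_simps)
  with x0 have "(\<Sum>x\<in>UNIV. \<psi> x) = 0" by simp
  moreover have "(\<Sum>y\<in>UNIV. \<psi> (y * z)) = (\<Sum>x\<in>UNIV. \<psi> x)"
    by (rule sum.reindex_bij_witness[of _ "\<lambda>x. x / z" "\<lambda>x. x * z"]) (use False in auto)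
  ultimately show ?thesis using False by simp
qed (simp add: character_zero)

lemma character_expansion_zero_minus_one:
  fixes E :: "'a \<Rightarrow> complex" and c :: "'a \<Rightarrow> int"
  assumes expansion: "\<And>y. E y = (\<Sum>z\<in>UNIV. of_int (c z) * \<psi> (- (y * z)))"
    and constant_off_zero: "\<And>y. y \<noteq> 0 \<Longrightarrow> E y = E 1"
  shows "E 0 - E 1 = of_nat (card (UNIV :: 'a set)) * of_int (c 1)"
proof -
  have "(\<Sum>y\<in>UNIV. E y * \<psi> y) = (\<Sum>z\<in>UNIV. of_int (c z) * (\<Sum>y\<in>UNIV. \<psi> (y * (1 - z))))"
  proof -
    have shift: "\<psi> (- (y * z)) * \<psi> y = \<psi> (y * (1 - z))" for y z
      by (simp add: algebra_simps flip: character_add)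
    have "E y * \<psi> y = (\<Sum>z\<in>UNIV. of_int (c z) * \<psi> (y * (1 - z)))" for y
      by (simp add: expansion sum_distrib_right mult.assoc shift)
    then have "(\<Sum>y\<in>UNIV. E y * \<psi> y) = (\<Sum>y\<in>UNIV. \<Sum>z\<in>UNIV. of_int (c z) * \<psi> (y * (1 - z)))"
      by simp
    also have "\<dots> = (\<Sum>z\<in>UNIV. \<Sum>y\<in>UNIV. of_int (c z) * \<psi> (y * (1 - z)))"
      by (rule sum.swap)
    finally show ?thesis by (simp add: sum_distrib_left)
  qed
  also have "\<dots> = of_nat (card (UNIV :: 'a set)) * of_int (c 1)"
    by (simp add: sum_character_mult if_distrib sum.If_cases)
  finally have "(\<Sum>y\<in>UNIV. E y * \<psi> y) = of_nat (card (UNIV :: 'a set)) * of_int (c 1)" .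
  moreover have "(\<Sum>y\<in>UNIV. E y * \<psi> y) = E 0 - E 1"
  proof -
    have "(\<Sum>y\<in>UNIV. \<psi> y) = \<psi> 0 + (\<Sum>y\<in>UNIV - {0}. \<psi> y)"
      by (simp add: sum.remove[of UNIV 0 \<psi>])
    then have "1 + (\<Sum>y\<in>UNIV - {0}. \<psi> y) = 0"
      using sum_character_mult[of 1] by (simp add: character_zero)
    then have sum_nonzero: "(\<Sum>y\<in>UNIV - {0}. \<psi> y) = - 1"
      unfolding add_eq_0_iff .
    have "(\<Sum>y\<in>UNIV - {0}. E y * \<psi> y) = E 1 * (\<Sum>y\<in>UNIV - {0}. \<psi> y)"
      unfolding sum_distrib_left
      by (intro sum.cong refl arg_cong2[where f = "(*)"] constant_off_zero) simp
    moreover have "(\<Sum>y\<in>UNIV. E y * \<psi> y) = E 0 * \<psi> 0 + (\<Sum>y\<in>UNIV - {0}. E y * \<psi> y)"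
      using sum.remove[of UNIV 0 "\<lambda>y. E y * \<psi> y"] by simp
    ultimately show ?thesis by (simp add: sum_nonzero character_zero)
  qed
  ultimately show ?thesis by simp
qed

end

context
  fixes p k :: nat
  assumes prime_p: "prime p" and card_UNIV: "card (UNIV :: 'a::{finite,field} set) = p ^ k"
begin

lemma CHAR_eq_prime: "CHAR('a) = p"
proof -
  have "prime CHAR('a)" by (intro prime_CHAR_semidom finite_imp_CHAR_pos) simp
  moreover have "CHAR('a) dvd p ^ k" using CHAR_dvd_CARD[where 'a = 'a] card_UNIV by simp
  ultimately have "CHAR('a) dvd p" by (rule prime_dvd_power)
  with \<open>prime CHAR('a)\<close> prime_p show ?thesis by (rule primes_dvd_imp_eq)
qed

lemma of_nat_prime_eq_0: "of_nat p = (0::'a)"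
  using of_nat_CHAR[where 'a = 'a] by (simp add: CHAR_eq_prime)

lemma power_prime_eq_self_imp_of_nat:
  assumes "(z :: 'a) ^ p = z"
  shows "z \<in> range of_nat"
proof -
  have p1: "p > 1" using prime_p by (rule prime_gt_1_nat)
  let ?F = "of_nat ` {..<p} :: 'a set"
  have "card ?F = p"
    by (subst card_image) (auto simp: inj_on_def of_nat_eq_iff_cong_CHAR CHAR_eq_prime cong_def)
  moreover have "(of_nat m :: 'a) ^ p = of_nat m" for m
    by (induction m) (simp_all add: add_power_prime_eq[OF prime_p of_nat_prime_eq_0] zero_power prime_gt_0_nat[OF prime_p])
  then have "?F \<subseteq> {z. z ^ p = z}" by auto
  moreover have "card {z :: 'a. z ^ p = z} \<le> p"
  proof -
    define P where "P = Polynomial.monom (1::'a) p - Polynomial.monom 1 1"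
    have "Polynomial.coeff P p = 1" using p1 by (simp add: P_def)
    then have "P \<noteq> 0" by auto
    moreover have "degree P \<le> p"
      unfolding P_def using p1 by (intro degree_diff_le) (simp_all add: degree_monom_eq)
    moreover have "{z. z ^ p = z} = {z. poly P z = 0}" by (simp add: P_def poly_monom)
    ultimately show ?thesis using card_poly_roots_bound[of P] by simp
  qed
  ultimately have "?F = {z. z ^ p = z}"
    using card_mono[of "{z :: 'a. z ^ p = z}" ?F] by (intro card_subset_eq) simp_all
  with assms show ?thesis by auto
qed

lemma field_trace_power_prime: "field_trace p k x ^ p = (field_trace p k x :: 'a)"
proof -
  have "field_trace p k x ^ p = (\<Sum>j<k. x ^ (p ^ Suc j))"
    unfolding field_trace_def
    by (simp add: sum_power_prime_eq[OF prime_p of_nat_prime_eq_0] power_mult[symmetric] mult.commute)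
  also have "\<dots> = field_trace p k x + x ^ (p ^ k) - x"
    using sum.lessThan_Suc_shift[of "\<lambda>j. x ^ (p ^ j)" k] by (simp add: field_trace_def)
  finally show ?thesis by (simp add: finite_field_power_card flip: card_UNIV)
qed

lemma field_trace_nonzero: "\<exists>x :: 'a. field_trace p k x \<noteq> 0"
proof (rule ccontr)
  assume "\<not> (\<exists>x :: 'a. field_trace p k x \<noteq> 0)"
  then have all_zero: "field_trace p k x = 0" for x :: 'a by simp
  have p1: "p > 1" using prime_p by (rule prime_gt_1_nat)
  have "card {0::'a, 1} \<le> card (UNIV :: 'a set)" by (rule card_mono) simp_all
  then have "k \<ge> 1" using card_UNIV by (cases k) simp_all
  define P where "P = (\<Sum>j<k. Polynomial.monom (1::'a) (p ^ j))"
  have "Polynomial.coeff P (p ^ (k - 1)) = (\<Sum>j<k. if j = k - 1 then 1 else 0)"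
    unfolding P_def coeff_sum using p1 by (intro sum.cong) (auto simp: power_inject_exp)
  also have "\<dots> = 1" using \<open>k \<ge> 1\<close> by simp
  finally have "P \<noteq> 0" by auto
  then have "card {x. poly P x = 0} \<le> degree P" by (rule card_poly_roots_bound)
  also have "degree P \<le> p ^ (k - 1)"
    unfolding P_def using p1
    by (intro degree_sum_le) (auto intro!: order.trans[OF degree_monom_le] power_increasing)
  also have "\<dots> < p ^ k" using p1 \<open>k \<ge> 1\<close> by (intro power_strict_increasing) auto
  also have "{x. poly P x = 0} = UNIV"
    using all_zero by (auto simp: P_def field_trace_def poly_sum poly_monom)
  finally show False by (simp add: card_UNIV)
qed

lemma exists_nontrivial_additive_character: "\<exists>\<psi> :: 'a \<Rightarrow> complex. nontrivial_additive_character \<psi>"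
proof -
  have "p \<ge> 1" using prime_gt_0_nat[OF prime_p] by simp
  have "\<exists>m. of_nat m = field_trace p k x" for x :: 'a
    using power_prime_eq_self_imp_of_nat[OF field_trace_power_prime] by (metis rangeE)
  then obtain f where f: "\<And>x. of_nat (f x) = field_trace p k (x :: 'a)" by metis
  have f_cong: "[f x = m] (mod p) \<longleftrightarrow> field_trace p k x = of_nat m" for x m
    by (simp add: f[symmetric] of_nat_eq_iff_cong_CHAR CHAR_eq_prime)
  define e :: "nat \<Rightarrow> complex" where "e j = exp (2 * of_real pi * \<i> * of_nat j / of_nat p)" for j
  have e_add: "e (i + j) = e i * e j" for i j
    by (simp add: e_def add_divide_distrib ring_distribs flip: exp_add)
  have e_eq: "e i = e j \<longleftrightarrow> [i = j] (mod p)" for i j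
    using complex_root_unity_eq[OF \<open>p \<ge> 1\<close>] by (simp add: e_def cong_def)
  have e_0: "e 0 = 1" by (simp add: e_def)
  have "nontrivial_additive_character (\<lambda>x. e (f x))"
  proof
    fix x y :: 'a
    have "[f (x + y) = f x + f y] (mod p)"
      by (simp add: f_cong f field_trace_add[OF prime_p of_nat_prime_eq_0])
    then show "e (f (x + y)) = e (f x) * e (f y)" by (simp add: e_add flip: e_eq)
  next
    have "[f 0 = 0] (mod p)"
      using prime_gt_0_nat[OF prime_p] by (simp add: f_cong field_trace_def power_0_left)
    then show "e (f 0) = 1" by (simp add: e_0 flip: e_eq)
  next
    obtain x0 :: 'a where "field_trace p k x0 \<noteq> 0" using field_trace_nonzero by blast
    then have "\<not> [f x0 = 0] (mod p)" by (simp add: f_cong)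
    then show "\<exists>x. e (f x) \<noteq> 1" by (auto simp: e_0 simp flip: e_eq)
  qed
  then show ?thesis by blast
qed

end

section \<open>The group determinant of GA(1, q)\<close>

lemma ga_carrier_eq: "ga_carrier = (UNIV - {0}) \<times> (UNIV :: 'a::field set)"
  by (auto simp: ga_carrier_def)

text \<open>The entry \<open>a (g h\<^sup>-\<^sup>1)\<close> of the group matrix in the coordinates \<open>(s, s t)\<close>.\<close>

definition ga_group_matrix :: "('a::field \<times> 'a \<Rightarrow> int) \<Rightarrow> 'a \<times> 'a \<Rightarrow> 'a \<times> 'a \<Rightarrow> int" where
  "ga_group_matrix a g h = a (fst g / fst h, fst g * (snd g - snd h))"

lemma group_det_ga_eq:
  "group_det (ga_carrier :: ('a::{finite,field} \<times> 'a) set) ga_mult ga_inv a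
     = det_on ((UNIV - {0}) \<times> UNIV) (ga_group_matrix a)"
proof -
  let ?G = "(UNIV - {0 :: 'a}) \<times> (UNIV :: 'a set)"
  define \<tau> where "\<tau> g = (fst g, fst g * snd g)" for g :: "'a \<times> 'a"
  have "bij_betw \<tau> ?G ?G"
    by (rule bij_betwI[where g = "\<lambda>g. (fst g, snd g / fst g)"]) (auto simp: \<tau>_def)
  then have "group_det ga_carrier ga_mult ga_inv a = det_on ?G (\<lambda>g h. a (ga_mult (\<tau> g) (ga_inv (\<tau> h))))"
    unfolding group_det_eq_det_on ga_carrier_eq by (rule det_on_reindex) simp
  also have "\<dots> = det_on ?G (ga_group_matrix a)"
  proof (rule det_on_cong)
    fix g h assume "h \<in> ?G"
    then have "ga_mult (\<tau> g) (ga_inv (\<tau> h)) = (fst g / fst h, fst g * (snd g - snd h))"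
      by (auto simp: \<tau>_def ga_mult_def ga_inv_def field_simps)
    then show "a (ga_mult (\<tau> g) (ga_inv (\<tau> h))) = ga_group_matrix a g h"
      by (simp add: ga_group_matrix_def)
  qed
  finally show ?thesis .
qed

context nontrivial_additive_character
begin

definition character_matrix :: "'a \<times> 'a \<Rightarrow> 'a \<times> 'a \<Rightarrow> complex" where
  "character_matrix g h = (if fst g = fst h then \<psi> (snd g * snd h) else 0)"

lemma det_on_character_matrix_nonzero:
  assumes "finite S"
  shows "det_on (S \<times> UNIV) character_matrix \<noteq> 0"
proof -
  let ?q = "card (UNIV :: 'a set)"
  let ?F' = "\<lambda>g h. if fst g = fst h then \<psi> (- (snd g * snd h)) else 0"
  have inverse: "(\<Sum>k\<in>S \<times> UNIV. character_matrix g k * ?F' k h) = (if g = h then of_nat ?q else 0)"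
    if "g \<in> S \<times> UNIV" for g h
  proof -
    obtain s t u v where g: "g = (s, t)" and h: "h = (u, v)" by fastforce
    have product: "\<psi> (t * w) * \<psi> (- (w * v)) = \<psi> (w * (t - v))" for w
      by (simp add: algebra_simps flip: character_add)
    have "(\<Sum>k\<in>S \<times> UNIV. character_matrix g k * ?F' k h)
        = (\<Sum>s'\<in>S. \<Sum>w\<in>UNIV. character_matrix g (s', w) * ?F' (s', w) h)"
      by (rule sum.cartesian_product')
    also have "\<dots> = (\<Sum>s'\<in>S. if s' = s then (if s = u then \<Sum>w\<in>UNIV. \<psi> (w * (t - v)) else 0) else 0)"
      by (intro sum.cong refl) (auto simp: character_matrix_def g h product)
    also have "\<dots> = (if s = u then \<Sum>w\<in>UNIV. \<psi> (w * (t - v)) else 0)"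
      using that g \<open>finite S\<close> by simp
    finally show ?thesis by (simp add: sum_character_mult character_zero g h)
  qed
  let ?G = "S \<times> (UNIV :: 'a set)"
  have "det_on ?G character_matrix * det_on ?G ?F'
      = det_on ?G (\<lambda>g h. \<Sum>k\<in>?G. character_matrix g k * ?F' k h)"
    using \<open>finite S\<close> by (simp add: det_on_mult)
  also have "\<dots> = det_on ?G (\<lambda>g h. if g = h then of_nat ?q else 0)"
    by (rule det_on_cong) (erule inverse)
  also have "\<dots> = of_nat ?q ^ card ?G"
    using \<open>finite S\<close> by (simp add: det_on_diagonal)
  finally show ?thesis by auto
qed

definition fourier_block :: "('a \<times> 'a \<Rightarrow> int) \<Rightarrow> 'a \<Rightarrow> 'a \<Rightarrow> 'a \<Rightarrow> complex" where
  "fourier_block a y s u = (\<Sum>w\<in>UNIV. of_int (a (s / u, s * w)) * \<psi> (- (y * w)))"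

definition fourier_block_matrix :: "('a \<times> 'a \<Rightarrow> int) \<Rightarrow> 'a \<times> 'a \<Rightarrow> 'a \<times> 'a \<Rightarrow> complex" where
  "fourier_block_matrix a g h = (if snd g = snd h then fourier_block a (snd g) (fst g) (fst h) else 0)"

lemma ga_group_matrix_mult_character_matrix:
  assumes "g \<in> (UNIV - {0}) \<times> UNIV" and "h \<in> (UNIV - {0}) \<times> UNIV"
  shows "(\<Sum>k\<in>(UNIV - {0}) \<times> UNIV. of_int (ga_group_matrix a g k) * character_matrix k h)
    = (\<Sum>k\<in>(UNIV - {0}) \<times> UNIV. character_matrix g k * fourier_block_matrix a k h)"
proof -
  obtain s t u y where g: "g = (s, t)" and h: "h = (u, y)" by fastforce
  have "(\<Sum>k\<in>(UNIV - {0}) \<times> UNIV. of_int (ga_group_matrix a g k) * character_matrix k h)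
      = (\<Sum>u'\<in>UNIV - {0}. if u' = u then \<Sum>v\<in>UNIV. of_int (a (s / u, s * (t - v))) * \<psi> (v * y) else 0)"
    unfolding sum.cartesian_product'
    by (intro sum.cong refl) (simp add: ga_group_matrix_def character_matrix_def g h)
  also have "\<dots> = (\<Sum>v\<in>UNIV. of_int (a (s / u, s * (t - v))) * \<psi> (v * y))"
    using assms(2) h by simp
  also have "\<dots> = (\<Sum>w\<in>UNIV. of_int (a (s / u, s * w)) * \<psi> ((t - w) * y))"
    by (rule sum.reindex_bij_witness[of _ "\<lambda>v. t - v" "\<lambda>w. t - w"]) auto
  also have "\<dots> = \<psi> (t * y) * fourier_block a y s u"
  proof -
    have "\<psi> ((t - w) * y) = \<psi> (t * y) * \<psi> (- (y * w))" for w
      by (simp add: algebra_simps flip: character_add)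
    then show ?thesis by (simp add: fourier_block_def sum_distrib_left mult_ac)
  qed
  also have "\<dots> = (\<Sum>u'\<in>UNIV - {0}. if u' = s then \<psi> (t * y) * fourier_block a y s u else 0)"
    using assms(1) g by simp
  also have "\<dots> = (\<Sum>k\<in>(UNIV - {0}) \<times> UNIV. character_matrix g k * fourier_block_matrix a k h)"
    unfolding sum.cartesian_product'
  proof (intro sum.cong refl)
    fix u'
    have "(\<Sum>v\<in>UNIV. character_matrix g (u', v) * fourier_block_matrix a (u', v) h)
        = (\<Sum>v\<in>UNIV. if v = y then (if u' = s then \<psi> (t * y) * fourier_block a y s u else 0) else 0)"
      by (intro sum.cong refl) (simp add: character_matrix_def fourier_block_matrix_def g h)
    then show "(if u' = s then \<psi> (t * y) * fourier_block a y s u else 0)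
        = (\<Sum>v\<in>UNIV. character_matrix g (u', v) * fourier_block_matrix a (u', v) h)"
      by simp
  qed
  finally show ?thesis .
qed

lemma det_ga_group_matrix_eq_prod_fourier_blocks:
  "of_int (det_on ((UNIV - {0}) \<times> UNIV) (ga_group_matrix a))
     = (\<Prod>y\<in>UNIV. det_on (UNIV - {0}) (fourier_block a y))"
proof -
  let ?G = "(UNIV - {0 :: 'a}) \<times> (UNIV :: 'a set)"
  have "of_int (det_on ?G (ga_group_matrix a)) = det_on ?G (\<lambda>g h. of_int (ga_group_matrix a g h))"
    by (simp add: det_on_of_int)
  also have "\<dots> = det_on ?G (fourier_block_matrix a)"
    by (rule det_on_similar[where F = character_matrix])
      (simp_all add: det_on_character_matrix_nonzero ga_group_matrix_mult_character_matrix)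
  also have "\<dots> = (\<Prod>y\<in>UNIV. det_on (UNIV - {0}) (fourier_block a y))"
    unfolding fourier_block_matrix_def by (rule det_on_block_diagonal) simp_all
  finally show ?thesis .
qed

lemma det_fourier_block_eq_one:
  assumes "y \<noteq> 0"
  shows "det_on (UNIV - {0}) (fourier_block a y) = det_on (UNIV - {0}) (fourier_block a 1)"
proof -
  have "bij_betw (\<lambda>s. y * s) (UNIV - {0}) (UNIV - {0})"
    by (rule bij_betwI[where g = "\<lambda>s. s / y"]) (use assms in auto)
  then have "det_on (UNIV - {0}) (fourier_block a y)
      = det_on (UNIV - {0}) (\<lambda>s u. fourier_block a y (y * s) (y * u))"
    by (rule det_on_reindex) simp
  also have "\<dots> = det_on (UNIV - {0}) (fourier_block a 1)"
  proof (rule det_on_cong)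
    fix s u :: 'a
    have "fourier_block a y (y * s) (y * u) = (\<Sum>w\<in>UNIV. of_int (a (s / u, s * (y * w))) * \<psi> (- (y * w)))"
      unfolding fourier_block_def using assms by (intro sum.cong) (auto simp: field_simps)
    also have "\<dots> = fourier_block a 1 s u"
      unfolding fourier_block_def
      by (rule sum.reindex_bij_witness[of _ "\<lambda>w. w / y" "\<lambda>w. y * w"]) (use assms in auto)
    finally show "fourier_block a y (y * s) (y * u) = fourier_block a 1 s u" .
  qed
  finally show ?thesis .
qed

lemma fourier_block_zero:
  assumes "s \<noteq> 0"
  shows "fourier_block a 0 s u = of_int (\<Sum>d\<in>UNIV. a (s / u, d))"
proof -
  have "fourier_block a 0 s u = (\<Sum>w\<in>UNIV. of_int (a (s / u, s * w)))"
    by (simp add: fourier_block_def character_zero)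
  also have "\<dots> = (\<Sum>d\<in>UNIV. of_int (a (s / u, d)))"
    by (rule sum.reindex_bij_witness[of _ "\<lambda>d. d / s" "\<lambda>w. s * w"]) (use assms in auto)
  finally show ?thesis by simp
qed

lemma det_fourier_block_character_expansion:
  obtains c :: "'a \<Rightarrow> int"
  where "\<And>y. det_on S (fourier_block a y) = (\<Sum>z\<in>UNIV. of_int (c z) * \<psi> (- (y * z)))"
proof -
  let ?J = "{\<sigma>. \<sigma> permutes S} \<times> (S \<rightarrow>\<^sub>E (UNIV :: 'a set))"
  define coeff where "coeff j = sign (fst j) * (\<Prod>s\<in>S. a (s / fst j s, s * snd j s))"
    for j :: "('a \<Rightarrow> 'a) \<times> ('a \<Rightarrow> 'a)"
  define Z where "Z j = (\<Sum>s\<in>S. snd j s)" for j :: "('a \<Rightarrow> 'a) \<times> ('a \<Rightarrow> 'a)"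
  have fin: "finite S" by simp
  then have "finite ?J" by (intro finite_cartesian_product finite_permutations finite_PiE) simp_all
  have expansion: "det_on S (fourier_block a y) = (\<Sum>j\<in>?J. of_int (coeff j) * \<psi> (- (y * Z j)))" for y
  proof -
    have "det_on S (fourier_block a y) = (\<Sum>\<sigma> | \<sigma> permutes S. \<Sum>W\<in>S \<rightarrow>\<^sub>E UNIV.
        of_int (sign \<sigma>) * (\<Prod>s\<in>S. of_int (a (s / \<sigma> s, s * W s)) * \<psi> (- (y * W s))))"
      unfolding det_on_def fourier_block_def by (simp add: prod_sum_PiE[OF fin] sum_distrib_left)
    also have "\<dots> = (\<Sum>j\<in>?J. of_int (coeff j) * \<psi> (- (y * Z j)))"
      unfolding sum.cartesian_product
      by (intro sum.cong refl)
        (auto simp: coeff_def Z_def prod.distrib of_int_prod character_sum[OF fin, symmetric]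
          sum_distrib_left sum_negf)
    finally show ?thesis .
  qed
  define c where "c z = (\<Sum>j\<in>{j \<in> ?J. Z j = z}. coeff j)" for z
  have "(\<Sum>j\<in>?J. of_int (coeff j) * \<psi> (- (y * Z j))) = (\<Sum>z\<in>UNIV. of_int (c z) * \<psi> (- (y * z)))" for y
  proof -
    have "(\<Sum>j\<in>?J. of_int (coeff j) * \<psi> (- (y * Z j)))
        = (\<Sum>z\<in>UNIV. \<Sum>j\<in>{j \<in> ?J. Z j = z}. of_int (coeff j) * \<psi> (- (y * Z j)))"
      by (rule sum.group[symmetric]) (simp_all add: \<open>finite ?J\<close>)
    also have "\<dots> = (\<Sum>z\<in>UNIV. \<Sum>j\<in>{j \<in> ?J. Z j = z}. of_int (coeff j) * \<psi> (- (y * z)))"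
      by (intro sum.cong refl) simp
    also have "\<dots> = (\<Sum>z\<in>UNIV. of_int (c z) * \<psi> (- (y * z)))"
      by (simp add: c_def of_int_sum sum_distrib_right)
    finally show ?thesis .
  qed
  with expansion show ?thesis by (intro that) simp
qed

lemma group_det_ga_factorization:
  fixes a :: "'a \<times> 'a \<Rightarrow> int"
  defines "A \<equiv> det_on (UNIV - {0}) (\<lambda>s u. \<Sum>d\<in>UNIV. a (s / u, d))"
  obtains C where "group_det ga_carrier ga_mult ga_inv a
    = A * (A - int (card (UNIV :: 'a set)) * C) ^ (card (UNIV :: 'a set) - 1)"
proof -
  let ?q = "card (UNIV :: 'a set)"
  define E where "E y = det_on (UNIV - {0}) (fourier_block a y)" for y
  have "E 0 = det_on (UNIV - {0}) (\<lambda>s u. of_int (\<Sum>d\<in>UNIV. a (s / u, d)))"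
    unfolding E_def by (rule det_on_cong) (simp add: fourier_block_zero)
  then have E_0: "E 0 = of_int A"
    by (simp only: det_on_of_int A_def)
  have E_1: "E y = E 1" if "y \<noteq> 0" for y
    unfolding E_def using that by (rule det_fourier_block_eq_one)
  obtain c where "\<And>y. E y = (\<Sum>z\<in>UNIV. of_int (c z) * \<psi> (- (y * z)))"
    unfolding E_def using det_fourier_block_character_expansion[where S = "UNIV - {0}" and a = a] by blast
  then have "E 0 - E 1 = of_nat ?q * of_int (c 1)"
    using E_1 by (rule character_expansion_zero_minus_one)
  then have "E 1 = of_int A - of_nat ?q * of_int (c 1)"
    by (simp add: E_0 eq_diff_eq diff_eq_eq add.commute)
  then have E_1_eq: "E 1 = of_int (A - int ?q * c 1)"
    by simp
  have "(\<Prod>y\<in>UNIV. E y) = E 0 * (\<Prod>y\<in>UNIV - {0}. E y)"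
    by (simp add: prod.remove[of UNIV 0 E])
  also have "(\<Prod>y\<in>UNIV - {0}. E y) = (\<Prod>y\<in>UNIV - {0 :: 'a}. E 1)"
    by (rule prod.cong) (auto intro: E_1)
  also have "\<dots> = E 1 ^ (?q - 1)"
    by (simp add: card_Diff_singleton)
  finally have "(\<Prod>y\<in>UNIV. E y) = E 0 * E 1 ^ (?q - 1)" .
  then have "of_int (group_det ga_carrier ga_mult ga_inv a) = (of_int (A * (A - int ?q * c 1) ^ (?q - 1)) :: complex)"
    by (simp add: group_det_ga_eq det_ga_group_matrix_eq_prod_fourier_blocks E_def [symmetric] E_0 E_1_eq)
  then show ?thesis using that by (simp only: of_int_eq_iff)
qed

end

theorem theorem1:
  fixes p k :: nat
  assumes "prime p" and "k \<ge> 1" and "card (UNIV :: 'a::{finite,field} set) = p ^ k"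
    and "int_group_det (ga_carrier :: ('a \<times> 'a) set) ga_mult ga_inv D"
  shows "\<exists>A B :: int. cyclic_int_det (p ^ k - 1) A \<and> D = A * B ^ (p ^ k - 1)
            \<and> [B = A] (mod int (p ^ k))"
proof -
  obtain a where D: "D = group_det (ga_carrier :: ('a \<times> 'a) set) ga_mult ga_inv a"
    using assms(4) by (auto simp: int_group_det_def)
  obtain \<psi> :: "'a \<Rightarrow> complex" where "nontrivial_additive_character \<psi>"
    using exists_nontrivial_additive_character[OF assms(1,3)] by blast
  then interpret nontrivial_additive_character \<psi> .
  define A where "A = det_on (UNIV - {0}) (\<lambda>s u. \<Sum>d\<in>UNIV. a (s / u, d))"
  obtain C where "D = A * (A - int (p ^ k) * C) ^ (p ^ k - 1)"
    using group_det_ga_factorization[of a] assms(3) unfolding D A_def by metis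
  moreover have "cyclic_int_det (p ^ k - 1) A"
    using cyclic_int_det_units_group_det[of "\<lambda>c. \<Sum>d\<in>UNIV. a (c, d)"] assms(3) by (simp add: A_def)
  moreover have "[A - int (p ^ k) * C = A] (mod int (p ^ k))"
    by (simp add: cong_iff_dvd_diff)
  ultimately show ?thesis by blast
qed

end
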